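(* Let $n\ge1$ be an integer and let $N$ be a generalized Waring process on $\mathbb R^d$ with parameters $a>0$, $\rho>n$, $k\in\mathbb N$ and parameter measure the Lebesgue measure on $\mathbb R^d$. Then $N$ is $n$th-order stationary: its $n$th-order moment measure $M_n(A_1\times\cdots\times A_n)=E[N(A_1)\cdots N(A_n)]$ is finite on products of bounded Borel sets and satisfies $M_n((A_1+u)\times\cdots\times(A_n+u))=M_n(A_1\times\cdots\times A_n)$ for all bounded Borel $A_1,\dots,A_n\subset\mathbb R^d$ and all $u\in\mathbb R^d$.
   Context: For $x>0$, $\beta\ge0$ write $x_{(\beta)}=\Gamma(x+\beta)/\Gamma(x)$, with $0_{(0)}=1$ and $0_{(n)}=0$ for integers $n\ge1$. For $a,\rho>0$ and $k_1,\dots,k_s\ge 0$, $\mathrm{MGWD}(a;k_1,\dots,k_s;\rho)$ denotes the law on $\{0,1,2,\dots\}^s$ with $P(X_i=x_i,\ i=1,\dots,s)=\frac{\rho_{(\sum_i k_i)}\,a_{(\sum_i x_i)}}{(\rho+a)_{(\sum_i k_i+\sum_i x_i)}}\prod_{i=1}^s\frac{(k_i)_{(x_i)}}{x_i!}$. A point process $N$ on a complete separable metric space $\mathcal S$ is a generalized Waring process with parameters $a,\rho,k>0$ and parameter measure $\mu$ (a boundedly finite Borel measure) if for every finite family of pairwise disjoint bounded Borel sets $A_1,\dots,A_l$, $(N(A_1),\dots,N(A_l))$ has the $\mathrm{MGWD}(a;k\mu(A_1),\dots,k\mu(A_l);\rho)$ distribution. *)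

theory Defs
  imports "HOL-Probability.Probability"
begin

definition gpoch :: "real \<Rightarrow> real \<Rightarrow> real" where
  "gpoch x \<beta> = (if x = 0 then (if \<beta> = 0 then 1 else 0) else Gamma (x + \<beta>) / Gamma x)"

definition mgwd_prob :: "real \<Rightarrow> (nat \<Rightarrow> real) \<Rightarrow> real \<Rightarrow> nat \<Rightarrow> (nat \<Rightarrow> nat) \<Rightarrow> real" where
  "mgwd_prob a ks \<rho> s xs =
     gpoch \<rho> (\<Sum>i<s. ks i) * gpoch a (\<Sum>i<s. real (xs i))
       / gpoch (\<rho> + a) ((\<Sum>i<s. ks i) + (\<Sum>i<s. real (xs i)))
     * (\<Prod>i<s. gpoch (ks i) (real (xs i)) / fact (xs i))"

definition point_process :: "'w measure \<Rightarrow> ('w \<Rightarrow> 'a::metric_space set \<Rightarrow> nat) \<Rightarrow> bool" where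
  "point_process M N \<longleftrightarrow>
     (\<forall>w\<in>space M. \<exists>\<nu>. sets \<nu> = sets borel \<and>
        (\<forall>A\<in>sets borel. bounded A \<longrightarrow> emeasure \<nu> A = of_nat (N w A))) \<and>
     (\<forall>A\<in>sets borel. bounded A \<longrightarrow> (\<lambda>w. N w A) \<in> measurable M (count_space UNIV))"

definition gen_waring_process ::
  "'w measure \<Rightarrow> ('w \<Rightarrow> 'a::metric_space set \<Rightarrow> nat) \<Rightarrow> real \<Rightarrow> real \<Rightarrow> real \<Rightarrow> 'a measure \<Rightarrow> bool" where
  "gen_waring_process M N a \<rho> k \<mu> \<longleftrightarrow>
     prob_space M \<and> point_process M N \<and> a > 0 \<and> \<rho> > 0 \<and> k > 0 \<and>
     sets \<mu> = sets borel \<and>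
     (\<forall>A\<in>sets borel. bounded A \<longrightarrow> emeasure \<mu> A < \<infinity>) \<and>
     (\<forall>(l::nat) (A::nat \<Rightarrow> 'a set) (xs::nat \<Rightarrow> nat).
        (\<forall>i<l. A i \<in> sets borel \<and> bounded (A i)) \<longrightarrow> disjoint_family_on A {..<l} \<longrightarrow>
        measure M {w\<in>space M. \<forall>i<l. N w (A i) = xs i}
          = mgwd_prob a (\<lambda>i. k * measure \<mu> (A i)) \<rho> l xs)"

end

theory Submission
  imports Defs "HOL-Library.Landau_Symbols"
begin

text \<open>Split \<open>A\<^sub>0, \<dots>, A\<^sub>n\<^sub>-\<^sub>1\<close> into the atoms of their Venn diagram. Each \<open>N(A\<^sub>i)\<close> is the sum
  of the counts of the atoms inside \<open>A\<^sub>i\<close>, so the moment is the expectation of a fixed function of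
  the atom counts. These are counts of disjoint sets, hence jointly MGWD with parameters
  \<open>k \<cdot> |atom|\<close>; a translation does not change the Lebesgue measure of an atom, hence neither the
  joint law nor the moment. For finiteness, the product is bounded by \<open>N(B)\<^sup>n\<close> for the union \<open>B\<close>,
  and by Euler's limit formula for \<open>\<Gamma>\<close> the one-dimensional Waring probabilities decay like
  \<open>x\<^sup>-\<^sup>\<rho>\<^sup>-\<^sup>1\<close>, so \<open>N(B)\<close> has a finite \<open>n\<close>-th moment when \<open>\<rho> > n\<close>.\<close>

lemma pochhammer_asymp_equiv:
  fixes z :: real
  assumes "z > 0"
  shows "(\<lambda>n. pochhammer z n) \<sim>[at_top] (\<lambda>n. fact (n - 1) * real n powr z / Gamma z)"
proof -
  have "Gamma_series' z \<sim>[at_top] (\<lambda>_. Gamma z)"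
    using Gamma_real_pos[OF assms] by (intro tendsto_imp_asymp_equiv_const Gamma_series'_LIMSEQ) auto
  then have "(\<lambda>n. fact (n - 1) * real n powr z / Gamma_series' z n)
               \<sim>[at_top] (\<lambda>n. fact (n - 1) * real n powr z / Gamma z)"
    by (intro asymp_equiv_intros)
  moreover have "eventually (\<lambda>n. fact (n - 1) * real n powr z / Gamma_series' z n = pochhammer z n) at_top"
    using eventually_gt_at_top[of 0]
  proof eventually_elim
    case (elim n)
    have "pochhammer z n \<noteq> 0" using assms by (simp add: pochhammer_eq_0_iff)
    then show ?case using elim by (simp add: Gamma_series'_def powr_def)
  qed
  ultimately show ?thesis by (rule asymp_equiv_transfer) simp
qed

lemma gpoch_of_nat_eq_pochhammer:
  "z > 0 \<Longrightarrow> gpoch z (real n) = pochhammer z n"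
  by (simp add: gpoch_def pochhammer_Gamma nonpos_Ints_def)

lemma mgwd_prob_cong:
  assumes "\<And>i. i < s \<Longrightarrow> ks i = ks' i"
  shows "mgwd_prob a ks \<rho> s xs = mgwd_prob a ks' \<rho> s xs"
proof -
  have "sum ks {..<s} = sum ks' {..<s}" "(\<Prod>i<s. gpoch (ks i) (real (xs i)) / fact (xs i)) =
        (\<Prod>i<s. gpoch (ks' i) (real (xs i)) / fact (xs i))"
    using assms by (auto intro: sum.cong prod.cong)
  then show ?thesis unfolding mgwd_prob_def by simp
qed

lemma mgwd_prob_single_eq_pochhammer:
  assumes "a > 0" "\<rho> > 0" "K > 0"
  shows "mgwd_prob a (\<lambda>_. K) \<rho> 1 (\<lambda>_. x) =
           Gamma (\<rho> + K) * Gamma (\<rho> + a) / (Gamma \<rho> * Gamma (\<rho> + a + K)) *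
           (pochhammer a x * pochhammer K x / (pochhammer (\<rho> + a + K) x * fact x))"
proof -
  have pos: "Gamma (\<rho> + a + K) \<noteq> 0" "Gamma (\<rho> + a) \<noteq> 0" "Gamma \<rho> \<noteq> 0"
    using assms by (auto intro!: Gamma_nonzero dest!: nonpos_Ints_nonpos)
  have "pochhammer (\<rho> + a + K) x = Gamma (\<rho> + a + (K + real x)) / Gamma (\<rho> + a + K)"
    using assms by (simp add: pochhammer_Gamma nonpos_Ints_def add.assoc)
  then have "gpoch (\<rho> + a) (K + real x) = Gamma (\<rho> + a + K) / Gamma (\<rho> + a) * pochhammer (\<rho> + a + K) x"
    using assms by (simp add: gpoch_def pos)
  with pos show ?thesis
    using assms by (simp add: mgwd_prob_def gpoch_of_nat_eq_pochhammer) (simp add: gpoch_def field_simps)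
qed

lemma mgwd_prob_single_asymp_equiv:
  assumes "a > 0" "\<rho> > 0" "K > 0"
  shows "(\<lambda>x. mgwd_prob a (\<lambda>_. K) \<rho> 1 (\<lambda>_. x)) \<sim>[at_top]
           (\<lambda>x. Gamma (\<rho> + a) * Gamma (\<rho> + K) / (Gamma \<rho> * Gamma a * Gamma K) * real x powr (- \<rho> - 1))"
proof -
  define c where "c = \<rho> + a + K"
  define D where "D = Gamma (\<rho> + K) * Gamma (\<rho> + a) / (Gamma \<rho> * Gamma c)"
  have "(\<lambda>x. mgwd_prob a (\<lambda>_. K) \<rho> 1 (\<lambda>_. x)) \<sim>[at_top]
        (\<lambda>x. D * ((fact (x - 1) * real x powr a / Gamma a) * (fact (x - 1) * real x powr K / Gamma K)
                / ((fact (x - 1) * real x powr c / Gamma c) * fact x)))"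
    unfolding mgwd_prob_single_eq_pochhammer[OF assms] c_def[symmetric] D_def[symmetric]
    using assms by (intro asymp_equiv_intros pochhammer_asymp_equiv) (auto simp: c_def)
  also have "eventually (\<lambda>x. D * ((fact (x - 1) * real x powr a / Gamma a) * (fact (x - 1) * real x powr K / Gamma K)
                / ((fact (x - 1) * real x powr c / Gamma c) * fact x)) =
        Gamma (\<rho> + a) * Gamma (\<rho> + K) / (Gamma \<rho> * Gamma a * Gamma K) * real x powr (- \<rho> - 1)) at_top"
    using eventually_gt_at_top[of 0]
  proof eventually_elim
    case (elim x)
    have "fact x = real x * fact (x - 1)"
      using elim by (metis fact_nonzero fact_reduce of_nat_fact)
    moreover have "real x powr a * real x powr K / (real x powr c * real x) = real x powr (- \<rho> - 1)"
      using elim by (simp add: c_def powr_add powr_diff powr_minus field_simps)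
    moreover have "Gamma c \<noteq> 0"
      using assms by (auto simp: c_def intro!: Gamma_nonzero dest!: nonpos_Ints_nonpos)
    ultimately show ?case using elim by (simp add: D_def field_simps)
  qed
  finally show ?thesis .
qed

lemma summable_moment_mgwd_prob_single:
  assumes "a > 0" "\<rho> > real m" "K \<ge> 0"
  shows "summable (\<lambda>x. real x ^ m * mgwd_prob a (\<lambda>_. K) \<rho> 1 (\<lambda>_. x))"
proof (cases "K = 0")
  case True
  have "eventually (\<lambda>x. real x ^ m * mgwd_prob a (\<lambda>_. K) \<rho> 1 (\<lambda>_. x) = 0) at_top"
    using eventually_gt_at_top[of 0] by eventually_elim (simp add: True mgwd_prob_def gpoch_def)
  from summable_cong[OF this] show ?thesis by simp
next
  case False
  define C where "C = Gamma (\<rho> + a) * Gamma (\<rho> + K) / (Gamma \<rho> * Gamma a * Gamma K)"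
  have "\<rho> > 0" using assms(2) by linarith
  then have "(\<lambda>x. real x ^ m * mgwd_prob a (\<lambda>_. K) \<rho> 1 (\<lambda>_. x)) \<sim>[at_top]
               (\<lambda>x. real x ^ m * (C * real x powr (- \<rho> - 1)))"
    unfolding C_def using assms False by (intro asymp_equiv_intros mgwd_prob_single_asymp_equiv) auto
  then have bigo: "(\<lambda>x. real x ^ m * mgwd_prob a (\<lambda>_. K) \<rho> 1 (\<lambda>_. x)) \<in>
               O(\<lambda>x. real x ^ m * (C * real x powr (- \<rho> - 1)))"
    by (rule asymp_equiv_imp_bigo)
  have "eventually (\<lambda>x. norm (real x ^ m * (C * real x powr (- \<rho> - 1))) =
                         \<bar>C\<bar> * real x powr (real m - \<rho> - 1)) at_top"
    using eventually_gt_at_top[of 0]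
  proof eventually_elim
    case (elim x)
    then have "real x ^ m * real x powr (- \<rho> - 1) = real x powr (real m - \<rho> - 1)"
      by (simp add: powr_realpow [symmetric] powr_add [symmetric] algebra_simps)
    then show ?case by (simp add: abs_mult)
  qed
  moreover have "summable (\<lambda>x. \<bar>C\<bar> * real x powr (real m - \<rho> - 1))"
    using assms(2) by (intro summable_mult) (simp add: summable_real_powr_iff)
  ultimately have "summable (\<lambda>x. norm (real x ^ m * (C * real x powr (- \<rho> - 1))))"
    using summable_cong by fast
  then show ?thesis using bigo by (rule summable_comparison_test_bigo)
qed

lemma map_upt_eq_iff: "map f [0..<m] = ys \<longleftrightarrow> length ys = m \<and> (\<forall>j<m. f j = ys ! j)"
  by (auto simp: list_eq_iff_nth_eq)

lemma measurable_map_upt_count_space: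
  assumes "\<And>j. j < m \<Longrightarrow> f j \<in> measurable M (count_space UNIV)"
  shows "(\<lambda>w. map (\<lambda>j. f j w) [0..<m]) \<in> measurable M (count_space (UNIV :: 'b::countable list set))"
  using assms
proof (induction m)
  case 0
  then show ?case by simp
next
  case (Suc m)
  have "(\<lambda>w. (\<lambda>ys. ys @ [f m w]) (map (\<lambda>j. f j w) [0..<m])) \<in> measurable M (count_space UNIV)"
    by (rule measurable_compose_countable[where f = "\<lambda>ys w. ys @ [f m w]"])
       (use Suc in \<open>auto intro: measurable_compose[OF _ measurable_count_space]\<close>)
  then show ?case by simp
qed

lemma point_process_count_measurable:
  "point_process M N \<Longrightarrow> A \<in> sets borel \<Longrightarrow> bounded A \<Longrightarrow> (\<lambda>w. N w A) \<in> measurable M (count_space UNIV)"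
  unfolding point_process_def by blast

lemma point_process_counting_measure:
  assumes "point_process M N" "w \<in> space M"
  obtains \<nu> where "sets \<nu> = sets borel"
    "\<And>A. A \<in> sets borel \<Longrightarrow> bounded A \<Longrightarrow> emeasure \<nu> A = of_nat (N w A)"
proof -
  from assms have "\<exists>\<nu>. sets \<nu> = sets borel \<and>
      (\<forall>A\<in>sets borel. bounded A \<longrightarrow> emeasure \<nu> A = of_nat (N w A))"
    unfolding point_process_def by blast
  then show ?thesis using that by blast
qed

lemma point_process_count_mono:
  assumes "point_process M N" "w \<in> space M" "A \<subseteq> B" "A \<in> sets borel" "B \<in> sets borel" "bounded B"
  shows "N w A \<le> N w B"
proof -
  obtain \<nu> where \<nu>: "sets \<nu> = sets borel"
    and N_eq: "\<And>C. C \<in> sets borel \<Longrightarrow> bounded C \<Longrightarrow> emeasure \<nu> C = of_nat (N w C)"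
    using point_process_counting_measure[OF assms(1,2)] by blast
  have "bounded A" using assms bounded_subset by blast
  then have "(of_nat (N w A) :: ennreal) \<le> of_nat (N w B)"
    using assms \<nu> by (metis N_eq emeasure_mono)
  then show ?thesis by simp
qed

lemma point_process_count_UN:
  assumes "point_process M N" "w \<in> space M" "finite I" "disjoint_family_on A I"
    and "\<And>i. i \<in> I \<Longrightarrow> A i \<in> sets borel" "\<And>i. i \<in> I \<Longrightarrow> bounded (A i)"
  shows "N w (\<Union>i\<in>I. A i) = (\<Sum>i\<in>I. N w (A i))"
proof -
  obtain \<nu> where \<nu>: "sets \<nu> = sets borel"
    and N_eq: "\<And>B. B \<in> sets borel \<Longrightarrow> bounded B \<Longrightarrow> emeasure \<nu> B = of_nat (N w B)"
    using point_process_counting_measure[OF assms(1,2)] by blast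
  have "of_nat (N w (\<Union>i\<in>I. A i)) = emeasure \<nu> (\<Union>i\<in>I. A i)"
    using assms by (intro N_eq[symmetric] sets.finite_UN bounded_UN) auto
  also have "\<dots> = (\<Sum>i\<in>I. emeasure \<nu> (A i))"
    using assms \<nu> by (intro sum_emeasure[symmetric]) auto
  also have "\<dots> = of_nat (\<Sum>i\<in>I. N w (A i))"
    using assms by (simp add: N_eq)
  finally show ?thesis by (simp only: of_nat_eq_iff)
qed

text \<open>\<open>venn_atom n A {}\<close> is empty, so the atoms with \<open>J \<subseteq> {..<n}\<close> partition \<open>\<Union>i<n. A i\<close>.\<close>

definition venn_atom :: "nat \<Rightarrow> (nat \<Rightarrow> 'a set) \<Rightarrow> nat set \<Rightarrow> 'a set" where
  "venn_atom n A J = (\<Union>i<n. A i) \<inter> (\<Inter>i<n. if i \<in> J then A i else - A i)"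

lemma mem_venn_atom:
  "x \<in> venn_atom n A J \<longleftrightarrow> (\<exists>i<n. x \<in> A i) \<and> (\<forall>i<n. x \<in> A i \<longleftrightarrow> i \<in> J)"
  unfolding venn_atom_def by auto

lemma venn_atom_subset: "venn_atom n A J \<subseteq> (\<Union>i<n. A i)"
  unfolding venn_atom_def by blast

lemma sets_venn_atom:
  assumes "\<And>i. i < n \<Longrightarrow> A i \<in> sets borel"
  shows "venn_atom n A J \<in> sets borel"
  unfolding venn_atom_def using assms
  by (intro sets.Int sets.finite_UN sets.countable_INT'') auto

lemma disjoint_family_on_venn_atom:
  "disjoint_family_on (venn_atom n A) (Pow {..<n})"
  unfolding disjoint_family_on_def
proof (intro ballI impI)
  fix J J' assume "J \<in> Pow {..<n}" "J' \<in> Pow {..<n}" "J \<noteq> J'"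
  then obtain i where "i < n" "i \<in> J \<longleftrightarrow> i \<notin> J'" by blast
  then show "venn_atom n A J \<inter> venn_atom n A J' = {}" by (auto simp: mem_venn_atom)
qed

lemma UN_venn_atom:
  assumes "i < n"
  shows "(\<Union>J\<in>{J. J \<subseteq> {..<n} \<and> i \<in> J}. venn_atom n A J) = A i"
proof (intro equalityI subsetI)
  fix x assume "x \<in> (\<Union>J\<in>{J. J \<subseteq> {..<n} \<and> i \<in> J}. venn_atom n A J)"
  then obtain J where "i \<in> J" "x \<in> venn_atom n A J" by blast
  with assms show "x \<in> A i" unfolding mem_venn_atom by blast
next
  fix x assume x: "x \<in> A i"
  define J where "J = {i'. i' < n \<and> x \<in> A i'}"
  have "x \<in> venn_atom n A J" using assms x unfolding mem_venn_atom J_def by blast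
  moreover have "J \<subseteq> {..<n}" "i \<in> J" using assms x unfolding J_def by auto
  ultimately show "x \<in> (\<Union>J\<in>{J. J \<subseteq> {..<n} \<and> i \<in> J}. venn_atom n A J)" by blast
qed

lemma venn_atom_vimage: "venn_atom n (\<lambda>i. f -` A i) J = f -` venn_atom n A J"
  by (auto simp: mem_venn_atom)

lemma disjoint_family_on_venn_atom_bij:
  assumes "bij_betw h {..<m} (Pow {..<n})"
  shows "disjoint_family_on (\<lambda>j. venn_atom n A (h j)) {..<m}"
  unfolding disjoint_family_on_def
proof (intro ballI impI)
  fix j j' assume "j \<in> {..<m}" "j' \<in> {..<m}" "j \<noteq> j'"
  with assms have "h j \<in> Pow {..<n}" "h j' \<in> Pow {..<n}" "h j \<noteq> h j'"
    by (auto simp: bij_betw_def inj_on_def)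
  then show "venn_atom n A (h j) \<inter> venn_atom n A (h j') = {}"
    using disjoint_family_on_venn_atom[of n A] unfolding disjoint_family_on_def by blast
qed

lemma point_process_count_eq_sum_venn_atom:
  assumes "point_process M N" "w \<in> space M" "i < n"
    and A: "\<And>i. i < n \<Longrightarrow> A i \<in> sets borel" "\<And>i. i < n \<Longrightarrow> bounded (A i)"
  shows "N w (A i) = (\<Sum>J | J \<subseteq> {..<n} \<and> i \<in> J. N w (venn_atom n A J))"
proof -
  have "bounded (venn_atom n A J)" for J
    using A by (intro bounded_subset[OF _ venn_atom_subset] bounded_UN) auto
  moreover have "disjoint_family_on (venn_atom n A) {J. J \<subseteq> {..<n} \<and> i \<in> J}"
    by (rule disjoint_family_on_mono[OF _ disjoint_family_on_venn_atom]) blast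
  ultimately have "N w (\<Union>J\<in>{J. J \<subseteq> {..<n} \<and> i \<in> J}. venn_atom n A J) =
             (\<Sum>J | J \<subseteq> {..<n} \<and> i \<in> J. N w (venn_atom n A J))"
    using A by (intro point_process_count_UN[OF assms(1,2)] sets_venn_atom)
       (auto intro: finite_subset[of _ "Pow {..<n}"])
  then show ?thesis unfolding UN_venn_atom[OF assms(3)] .
qed

lemma point_process_count_eq_sum_venn_atom_bij:
  assumes "point_process M N" "w \<in> space M" "bij_betw h {..<m} (Pow {..<n})" "i < n"
    and "\<And>i. i < n \<Longrightarrow> A i \<in> sets borel" "\<And>i. i < n \<Longrightarrow> bounded (A i)"
  shows "N w (A i) = (\<Sum>j | j < m \<and> i \<in> h j. N w (venn_atom n A (h j)))"
proof -
  have "bij_betw h {j. j < m \<and> i \<in> h j} {J. J \<subseteq> {..<n} \<and> i \<in> J}"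
  proof (rule bij_betw_subset[OF assms(3)])
    have "h ` {..<m} = Pow {..<n}" using assms(3) by (simp add: bij_betw_def)
    then show "h ` {j. j < m \<and> i \<in> h j} = {J. J \<subseteq> {..<n} \<and> i \<in> J}"
      by (auto simp: image_iff) (metis Pow_iff imageE lessThan_iff)
  qed auto
  then have "(\<Sum>J | J \<subseteq> {..<n} \<and> i \<in> J. N w (venn_atom n A J)) =
             (\<Sum>j | j < m \<and> i \<in> h j. N w (venn_atom n A (h j)))"
    by (rule sum.reindex_bij_betw[symmetric])
  then show ?thesis
    using point_process_count_eq_sum_venn_atom[where A = A, OF assms(1,2,4-6)] by simp
qed

lemma gen_waring_processD:
  assumes "gen_waring_process M N a \<rho> k \<mu>"
  shows "prob_space M" "point_process M N" "a > 0" "k > 0"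
    and "\<And>l A xs. \<forall>i<l. A i \<in> sets borel \<and> bounded (A i) \<Longrightarrow> disjoint_family_on A {..<l} \<Longrightarrow>
           measure M {w\<in>space M. \<forall>i<l. N w (A i) = xs i} = mgwd_prob a (\<lambda>i. k * measure \<mu> (A i)) \<rho> l xs"
  using assms unfolding gen_waring_process_def by blast+

lemma gen_waring_process_prob_count:
  assumes "gen_waring_process M N a \<rho> k \<mu>" "B \<in> sets borel" "bounded B"
  shows "measure M {w\<in>space M. N w B = x} = mgwd_prob a (\<lambda>_. k * measure \<mu> B) \<rho> 1 (\<lambda>_. x)"
  using gen_waring_processD(5)[OF assms(1), of 1 "\<lambda>_. B" "\<lambda>_. x"] assms(2,3)
  by (simp add: disjoint_family_on_def)

lemma gen_waring_process_count_distr: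
  assumes gw: "gen_waring_process M N a \<rho> k \<mu>" and B: "B \<in> sets borel" "bounded B"
  shows "distr M (count_space UNIV) (\<lambda>w. N w B) =
           density (count_space UNIV) (\<lambda>x. ennreal (mgwd_prob a (\<lambda>_. k * measure \<mu> B) \<rho> 1 (\<lambda>_. x)))"
proof (rule measure_eqI_countable[where A = UNIV])
  interpret prob_space M using gen_waring_processD(1)[OF gw] .
  have N_meas: "(\<lambda>w. N w B) \<in> measurable M (count_space UNIV)"
    using point_process_count_measurable[OF gen_waring_processD(2)[OF gw] B] .
  fix x :: nat
  have "emeasure (distr M (count_space UNIV) (\<lambda>w. N w B)) {x} = emeasure M {w\<in>space M. N w B = x}"
    using N_meas by (subst emeasure_distr) (auto simp: vimage_def Int_def conj_commute)
  also have "\<dots> = ennreal (mgwd_prob a (\<lambda>_. k * measure \<mu> B) \<rho> 1 (\<lambda>_. x))"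
    using gen_waring_process_prob_count[OF gw B] by (simp add: emeasure_eq_measure)
  finally show "emeasure (distr M (count_space UNIV) (\<lambda>w. N w B)) {x} =
      emeasure (density (count_space UNIV) (\<lambda>x. ennreal (mgwd_prob a (\<lambda>_. k * measure \<mu> B) \<rho> 1 (\<lambda>_. x)))) {x}"
    by (simp add: emeasure_density)
qed auto

lemma gen_waring_process_integrable_count_power:
  assumes gw: "gen_waring_process M N a \<rho> k \<mu>" and "\<rho> > real m"
    and B: "B \<in> sets borel" "bounded B"
  shows "integrable M (\<lambda>w. real (N w B) ^ m)"
proof -
  define p where "p x = mgwd_prob a (\<lambda>_. k * measure \<mu> B) \<rho> 1 (\<lambda>_. x)" for x
  have p_nonneg: "p x \<ge> 0" for x
    unfolding p_def gen_waring_process_prob_count[OF gw B, symmetric] by (rule measure_nonneg)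
  have "summable (\<lambda>x. real x ^ m * p x)"
    unfolding p_def using gen_waring_processD(3,4)[OF gw] assms(2)
    by (intro summable_moment_mgwd_prob_single) auto
  then have "integrable (density (count_space UNIV) (\<lambda>x. ennreal (p x))) (\<lambda>x. real x ^ m)"
    using p_nonneg by (subst integrable_density) (auto simp: integrable_count_space_nat_iff mult.commute)
  then show ?thesis
    using gen_waring_process_count_distr[OF gw B] point_process_count_measurable[OF gen_waring_processD(2)[OF gw] B]
    by (subst integrable_distr_eq[symmetric]) (auto simp: p_def)
qed

lemma gen_waring_process_integrable_prod:
  fixes N :: "'w \<Rightarrow> 'a::metric_space set \<Rightarrow> nat"
  assumes gw: "gen_waring_process M N a \<rho> k \<mu>" and "\<rho> > real n"
    and A: "\<And>i. i < n \<Longrightarrow> A i \<in> sets borel" "\<And>i. i < n \<Longrightarrow> bounded (A i)"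
  shows "integrable M (\<lambda>w. \<Prod>i<n. real (N w (A i)))"
proof (rule Bochner_Integration.integrable_bound)
  have pp: "point_process M N" by (rule gen_waring_processD(2)[OF gw])
  define B where "B = (\<Union>i<n. A i)"
  have B: "B \<in> sets borel" "bounded B"
    using A unfolding B_def by (auto intro!: sets.finite_UN bounded_UN)
  show "integrable M (\<lambda>w. real (N w B) ^ n)"
    using gen_waring_process_integrable_count_power[OF gw assms(2) B] .
  have "(\<lambda>w. real (N w (A i))) \<in> borel_measurable M" if "i < n" for i
    using point_process_count_measurable[OF pp A[OF that]] by measurable
  then show "(\<lambda>w. \<Prod>i<n. real (N w (A i))) \<in> borel_measurable M"
    by (intro borel_measurable_prod) auto
  show "AE w in M. norm (\<Prod>i<n. real (N w (A i))) \<le> norm (real (N w B) ^ n)"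
  proof (rule AE_I2)
    fix w assume w: "w \<in> space M"
    have "(\<Prod>i<n. real (N w (A i))) \<le> (\<Prod>i<n. real (N w B))"
      using point_process_count_mono[OF pp w _ A(1) B] by (intro prod_mono) (auto simp: B_def)
    then show "norm (\<Prod>i<n. real (N w (A i))) \<le> norm (real (N w B) ^ n)"
      by (simp add: abs_prod)
  qed
qed

lemma gen_waring_process_distr_counts:
  assumes gw: "gen_waring_process M N a \<rho> k \<mu>"
    and C: "\<And>j. j < m \<Longrightarrow> C j \<in> sets borel" "\<And>j. j < m \<Longrightarrow> bounded (C j)"
    and disj: "disjoint_family_on C {..<m}"
  shows "emeasure (distr M (count_space UNIV) (\<lambda>w. map (\<lambda>j. N w (C j)) [0..<m])) {ys} =
           (if length ys = m then ennreal (mgwd_prob a (\<lambda>j. k * measure \<mu> (C j)) \<rho> m (\<lambda>j. ys ! j))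
            else 0)"
proof -
  interpret prob_space M using gen_waring_processD(1)[OF gw] .
  have "(\<lambda>w. map (\<lambda>j. N w (C j)) [0..<m]) \<in> measurable M (count_space UNIV)"
    using C by (intro measurable_map_upt_count_space point_process_count_measurable[OF gen_waring_processD(2)[OF gw]])
  then have "emeasure (distr M (count_space UNIV) (\<lambda>w. map (\<lambda>j. N w (C j)) [0..<m])) {ys} =
             emeasure M ((\<lambda>w. map (\<lambda>j. N w (C j)) [0..<m]) -` {ys} \<inter> space M)"
    by (rule emeasure_distr) simp
  also have "(\<lambda>w. map (\<lambda>j. N w (C j)) [0..<m]) -` {ys} \<inter> space M =
             {w\<in>space M. length ys = m \<and> (\<forall>j<m. N w (C j) = ys ! j)}"
    unfolding vimage_def singleton_iff map_upt_eq_iff by blast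
  also have "emeasure M {w\<in>space M. length ys = m \<and> (\<forall>j<m. N w (C j) = ys ! j)} =
             (if length ys = m then ennreal (mgwd_prob a (\<lambda>j. k * measure \<mu> (C j)) \<rho> m (\<lambda>j. ys ! j))
                   else 0)"
    using gen_waring_processD(5)[OF gw, of m C "\<lambda>j. ys ! j"] C disj by (simp add: emeasure_eq_measure)
  finally show ?thesis .
qed

lemma gen_waring_process_distr_counts_eq:
  fixes N :: "'w \<Rightarrow> 'a::metric_space set \<Rightarrow> nat"
  assumes gw: "gen_waring_process M N a \<rho> k \<mu>"
    and C: "\<And>j. j < m \<Longrightarrow> C j \<in> sets borel" "\<And>j. j < m \<Longrightarrow> bounded (C j)" "disjoint_family_on C {..<m}"
    and D: "\<And>j. j < m \<Longrightarrow> D j \<in> sets borel" "\<And>j. j < m \<Longrightarrow> bounded (D j)" "disjoint_family_on D {..<m}"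
    and measure_eq: "\<And>j. j < m \<Longrightarrow> measure \<mu> (C j) = measure \<mu> (D j)"
  shows "distr M (count_space UNIV) (\<lambda>w. map (\<lambda>j. N w (C j)) [0..<m]) =
         distr M (count_space UNIV) (\<lambda>w. map (\<lambda>j. N w (D j)) [0..<m])"
proof (rule measure_eqI_countable[where A = UNIV])
  fix ys :: "nat list"
  have "mgwd_prob a (\<lambda>j. k * measure \<mu> (C j)) \<rho> m xs = mgwd_prob a (\<lambda>j. k * measure \<mu> (D j)) \<rho> m xs"
    for xs
    using measure_eq by (intro mgwd_prob_cong) simp
  then show "emeasure (distr M (count_space UNIV) (\<lambda>w. map (\<lambda>j. N w (C j)) [0..<m])) {ys} =
             emeasure (distr M (count_space UNIV) (\<lambda>w. map (\<lambda>j. N w (D j)) [0..<m])) {ys}"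
    by (simp add: gen_waring_process_distr_counts[OF gw C] gen_waring_process_distr_counts[OF gw D])
qed auto

lemma integral_comp_eq_if_distr_eq:
  fixes g :: "'b::countable \<Rightarrow> real"
  assumes "X \<in> measurable M (count_space UNIV)" "Y \<in> measurable M (count_space UNIV)"
    and "distr M (count_space UNIV) X = distr M (count_space UNIV) Y"
  shows "(\<integral>w. g (X w) \<partial>M) = (\<integral>w. g (Y w) \<partial>M)"
  using integral_distr[of X M "count_space UNIV" g] integral_distr[of Y M "count_space UNIV" g] assms
  by simp

lemma gen_waring_process_integral_prod_eq:
  fixes N :: "'w \<Rightarrow> 'a::metric_space set \<Rightarrow> nat"
  assumes gw: "gen_waring_process M N a \<rho> k \<mu>"
    and A: "\<And>i. i < n \<Longrightarrow> A i \<in> sets borel" "\<And>i. i < n \<Longrightarrow> bounded (A i)"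
    and B: "\<And>i. i < n \<Longrightarrow> B i \<in> sets borel" "\<And>i. i < n \<Longrightarrow> bounded (B i)"
    and atoms_eq: "\<And>J. J \<subseteq> {..<n} \<Longrightarrow> measure \<mu> (venn_atom n A J) = measure \<mu> (venn_atom n B J)"
  shows "(\<integral>w. (\<Prod>i<n. real (N w (A i))) \<partial>M) = (\<integral>w. (\<Prod>i<n. real (N w (B i))) \<partial>M)"
proof -
  have pp: "point_process M N" by (rule gen_waring_processD(2)[OF gw])
  \<comment> \<open>enumerating the atoms by \<open>h\<close> turns their counts into a list, a random variable with
     values in a countable space\<close>
  define m where "m = card (Pow {..<n :: nat})"
  obtain h where h: "bij_betw h {..<m} (Pow {..<n})"
    using ex_bij_betw_nat_finite[of "Pow {..<n}"] by (auto simp: m_def atLeast0LessThan)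
  define counts where "counts A w = map (\<lambda>j. N w (venn_atom n A (h j))) [0..<m]"
    for A :: "nat \<Rightarrow> 'a set" and w
  define g where "g ys = (\<Prod>i<n. real (\<Sum>j | j < m \<and> i \<in> h j. ys ! j))" for ys :: "nat list"
  have atoms: "\<And>j. venn_atom n A (h j) \<in> sets borel" "\<And>j. bounded (venn_atom n A (h j))"
    if "\<And>i. i < n \<Longrightarrow> A i \<in> sets borel" "\<And>i. i < n \<Longrightarrow> bounded (A i)" for A
    using that by (auto intro!: sets_venn_atom bounded_subset[OF _ venn_atom_subset] bounded_UN)
  have counts_meas: "counts A \<in> measurable M (count_space UNIV)"
    if "\<And>i. i < n \<Longrightarrow> A i \<in> sets borel" "\<And>i. i < n \<Longrightarrow> bounded (A i)" for A
    unfolding counts_def using atoms[OF that]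
    by (intro measurable_map_upt_count_space point_process_count_measurable[OF pp])
  have integrand: "(\<Prod>i<n. real (N w (A i))) = g (counts A w)"
    if "\<And>i. i < n \<Longrightarrow> A i \<in> sets borel" "\<And>i. i < n \<Longrightarrow> bounded (A i)" "w \<in> space M" for A w
  proof -
    have "N w (A i) = (\<Sum>j | j < m \<and> i \<in> h j. counts A w ! j)" if "i < n" for i
    proof -
      have "N w (A i) = (\<Sum>j | j < m \<and> i \<in> h j. N w (venn_atom n A (h j)))"
        by (rule point_process_count_eq_sum_venn_atom_bij[OF pp \<open>w \<in> space M\<close> h \<open>i < n\<close>])
           (use \<open>\<And>i. i < n \<Longrightarrow> A i \<in> sets borel\<close> \<open>\<And>i. i < n \<Longrightarrow> bounded (A i)\<close> in auto)
      then show ?thesis by (simp add: counts_def)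
    qed
    then show ?thesis unfolding g_def by simp
  qed
  have "h j \<subseteq> {..<n}" if "j < m" for j
    using h that by (auto simp: bij_betw_def)
  then have "distr M (count_space UNIV) (counts A) = distr M (count_space UNIV) (counts B)"
    unfolding counts_def using atoms[of A, OF A] atoms[of B, OF B] atoms_eq h
    by (intro gen_waring_process_distr_counts_eq[OF gw] disjoint_family_on_venn_atom_bij) auto
  then have "(\<integral>w. g (counts A w) \<partial>M) = (\<integral>w. g (counts B w) \<partial>M)"
    using counts_meas[of A, OF A] counts_meas[of B, OF B] by (rule integral_comp_eq_if_distr_eq[rotated 2])
  then show ?thesis
    using integrand[of A, OF A] integrand[of B, OF B] by (simp cong: Bochner_Integration.integral_cong)
qed

lemma translation_eq_vimage:
  fixes u :: "'a::ab_group_add"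
  shows "(\<lambda>x. x + u) ` S = (\<lambda>x. x - u) -` S"
  by (auto simp: image_iff) (metis diff_add_cancel)

lemma measure_lborel_vimage_translation:
  fixes u :: "'a::euclidean_space"
  assumes "S \<in> sets borel"
  shows "measure lborel ((\<lambda>x. x - u) -` S) = measure lborel S"
proof -
  have "measure lborel S = measure (distr lborel borel ((+) (- u))) S"
    by (simp add: lborel_distr_plus)
  also have "\<dots> = measure lborel ((+) (- u) -` S)"
    using assms by (subst measure_distr) auto
  also have "(+) (- u) -` S = (\<lambda>x. x - u) -` S"
    by auto
  finally show ?thesis ..
qed

theorem theorem9:
  fixes M :: "'w measure" and N :: "'w \<Rightarrow> 'a::euclidean_space set \<Rightarrow> nat"
    and n :: nat and a \<rho> :: real and k :: nat
  assumes "n \<ge> 1" and "a > 0" and "\<rho> > real n" and "k > 0"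
    and "gen_waring_process M N a \<rho> (real k) lborel"
  shows "\<forall>A::nat \<Rightarrow> 'a set. (\<forall>i<n. A i \<in> sets borel \<and> bounded (A i)) \<longrightarrow>
           integrable M (\<lambda>w. \<Prod>i<n. real (N w (A i))) \<and>
           (\<forall>u::'a. integral\<^sup>L M (\<lambda>w. \<Prod>i<n. real (N w ((\<lambda>x. x + u) ` A i)))
                   = integral\<^sup>L M (\<lambda>w. \<Prod>i<n. real (N w (A i))))"
proof (intro allI impI conjI)
  fix A :: "nat \<Rightarrow> 'a set" and u :: 'a
  assume "\<forall>i<n. A i \<in> sets borel \<and> bounded (A i)"
  then have A: "\<And>i. i < n \<Longrightarrow> A i \<in> sets borel" "\<And>i. i < n \<Longrightarrow> bounded (A i)" by auto
  show "integrable M (\<lambda>w. \<Prod>i<n. real (N w (A i)))"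
    by (rule gen_waring_process_integrable_prod[OF assms(5,3) A])
  have translated: "(\<lambda>x. x + u) ` A i \<in> sets borel" "bounded ((\<lambda>x. x + u) ` A i)" if "i < n" for i
    using A[OF that] bounded_translation[of "A i" u]
    by (auto simp: translation_eq_vimage add.commute intro!: measurable_sets_borel cong: image_cong_simp)
  show "integral\<^sup>L M (\<lambda>w. \<Prod>i<n. real (N w ((\<lambda>x. x + u) ` A i)))
          = integral\<^sup>L M (\<lambda>w. \<Prod>i<n. real (N w (A i)))"
    using A translated
    by (intro gen_waring_process_integral_prod_eq[OF assms(5)])
       (simp_all add: translation_eq_vimage venn_atom_vimage measure_lborel_vimage_translation sets_venn_atom)
qed

end
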